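(* Let $\Gamma=F_r$ ($r\ge2$) be free on $\{a,b,a_3,\dots,a_r\}$, let $n\ge2$, $u_n=a^nba^{-n}b^{-1}$, $D_n=V_{u_n}\subseteq Y$. Let $t\in\Gamma$ and $y\in Y$, and assume $t$ starts with $u_n$. Then $ty\in D_n$ if and only if $y$ does not start with $t^{-1}u_nb$.
   Context: $Y$ is the Gromov boundary of $\Gamma$: infinite reduced words in the generators and their inverses, with $\Gamma$ acting by concatenation and cancellation. For nontrivial $s\in\Gamma$: $y\in Y$ starts with $s$ if $y=sy'$ with $y'\in Y$ and the last letter of the reduced word of $s$ is not the inverse of the first letter of $y'$; $V_s$ is the set of $y\in Y$ starting with $s$; $t\in\Gamma$ starts with $s$ if the reduced word of $t$ begins with the reduced word of $s$. *)

theory Defs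
  imports Main "HOL-Library.Sublist"
begin

text \<open>Letters of the free group F_r: (i, True) is generator number i, (i, False) its inverse.
  Generator 0 is a, generator 1 is b, generators 2..r-1 are a_3..a_r.\<close>
type_synonym letter = "nat \<times> bool"

definition inv_letter :: "letter \<Rightarrow> letter" where
  "inv_letter x = (fst x, \<not> snd x)"

definition reduced :: "letter list \<Rightarrow> bool" where
  "reduced w \<longleftrightarrow> (\<forall>i. Suc i < length w \<longrightarrow> w ! Suc i \<noteq> inv_letter (w ! i))"

definition Gamma :: "nat \<Rightarrow> letter list set" where
  "Gamma r = {w. reduced w \<and> (\<forall>x\<in>set w. fst x < r)}"

text \<open>Free reduction of a word (yields the reduced form); group product is red (s @ t).\<close>
fun red :: "letter list \<Rightarrow> letter list" where
  "red [] = []"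
| "red (x # xs) = (case red xs of [] \<Rightarrow> [x]
     | y # ys \<Rightarrow> (if y = inv_letter x then ys else x # y # ys))"

definition inv_word :: "letter list \<Rightarrow> letter list" where
  "inv_word w = rev (map inv_letter w)"

text \<open>Gromov boundary Y: infinite reduced words.\<close>
definition Ybd :: "nat \<Rightarrow> (nat \<Rightarrow> letter) set" where
  "Ybd r = {y. (\<forall>i. fst (y i) < r) \<and> (\<forall>i. y (Suc i) \<noteq> inv_letter (y i))}"

definition conc :: "letter list \<Rightarrow> (nat \<Rightarrow> letter) \<Rightarrow> (nat \<Rightarrow> letter)" where
  "conc s y = (\<lambda>i. if i < length s then s ! i else y (i - length s))"

definition lmul :: "letter \<Rightarrow> (nat \<Rightarrow> letter) \<Rightarrow> (nat \<Rightarrow> letter)" where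
  "lmul x z = (if z 0 = inv_letter x then (\<lambda>i. z (Suc i)) else conc [x] z)"

definition act :: "letter list \<Rightarrow> (nat \<Rightarrow> letter) \<Rightarrow> (nat \<Rightarrow> letter)" where
  "act t y = foldr lmul t y"

definition starts_Y :: "nat \<Rightarrow> letter list \<Rightarrow> (nat \<Rightarrow> letter) \<Rightarrow> bool" where
  "starts_Y r s y \<longleftrightarrow> s \<noteq> [] \<and>
     (\<exists>y'\<in>Ybd r. y = conc s y' \<and> y' 0 \<noteq> inv_letter (last s))"

definition V :: "nat \<Rightarrow> letter list \<Rightarrow> (nat \<Rightarrow> letter) set" where
  "V r s = {y \<in> Ybd r. starts_Y r s y}"

definition starts_G :: "letter list \<Rightarrow> letter list \<Rightarrow> bool" where
  "starts_G s t \<longleftrightarrow> prefix s t"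

definition ga :: letter where "ga = (0, True)"
definition gb :: letter where "gb = (1, True)"

definition u :: "nat \<Rightarrow> letter list" where
  "u n = replicate n ga @ [gb] @ replicate n (inv_letter ga) @ [inv_letter gb]"

end

theory Submission
  imports Defs
begin

text \<open>Write \<open>t = u\<^sub>n w\<close> and put \<open>z = w y\<close>, so that \<open>t y = u\<^sub>n z\<close>. Since \<open>u\<^sub>n\<close> is reduced and
  ends in \<open>b\<^sup>-\<^sup>1\<close>, the product \<open>u\<^sub>n z\<close> is computed without cancellation, and so starts with
  \<open>u\<^sub>n\<close>, exactly when \<open>z\<close> does not start with \<open>b\<close>. On the other side \<open>t\<^sup>-\<^sup>1 u\<^sub>n b\<close> reduces to
  the reduced word \<open>w\<^sup>-\<^sup>1 b\<close>, and \<open>y = w\<^sup>-\<^sup>1 z\<close> starts with \<open>w\<^sup>-\<^sup>1 b\<close> exactly when \<open>z\<close> starts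
  with \<open>b\<close>. Only the last letter of \<open>u\<^sub>n\<close> enters, so the argument works for any nonempty
  prefix of \<open>t\<close> in place of \<open>u\<^sub>n\<close>.\<close>

lemma inv_letter_inv_letter [simp]: "inv_letter (inv_letter x) = x"
  by (simp add: inv_letter_def)

lemma fst_inv_letter [simp]: "fst (inv_letter x) = fst x"
  by (simp add: inv_letter_def)

lemma reduced_Nil [simp]: "reduced []"
  by (simp add: reduced_def)

lemma reduced_Cons: "reduced (x # xs) \<longleftrightarrow> reduced xs \<and> (xs \<noteq> [] \<longrightarrow> hd xs \<noteq> inv_letter x)"
proof -
  have split_first: "(\<forall>i::nat. P i) \<longleftrightarrow> P 0 \<and> (\<forall>i. P (Suc i))" for P
    by (metis not0_implies_Suc)
  show ?thesis
    unfolding reduced_def split_first[of "\<lambda>i. Suc i < length (x # xs) \<longrightarrow> _ i"]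
    by (auto simp: hd_conv_nth)
qed

lemma reduced_append:
  "reduced (xs @ ys) \<longleftrightarrow> reduced xs \<and> reduced ys \<and>
     (xs \<noteq> [] \<longrightarrow> ys \<noteq> [] \<longrightarrow> hd ys \<noteq> inv_letter (last xs))"
  by (induction xs) (auto simp: reduced_Cons)

lemma inv_word_Cons: "inv_word (x # w) = inv_word w @ [inv_letter x]"
  by (simp add: inv_word_def)

lemma inv_word_append: "inv_word (v @ w) = inv_word w @ inv_word v"
  by (simp add: inv_word_def)

lemma set_inv_word: "set (inv_word w) = inv_letter ` set w"
  by (simp add: inv_word_def)

lemma inv_word_inv_word [simp]: "inv_word (inv_word w) = w"
  by (simp add: inv_word_def rev_map comp_def)

lemma reduced_inv_word: "reduced (inv_word w) \<longleftrightarrow> reduced w"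
  by (induction w) (auto simp: inv_word_def reduced_append reduced_Cons last_rev hd_map)

lemma reduced_red: "reduced (red w)"
  by (induction w) (auto simp: reduced_Cons split: list.split)

lemma red_reduced: "reduced w \<Longrightarrow> red w = w"
  by (induction w) (auto simp: reduced_Cons split: list.split)

lemma red_append_red: "red (xs @ red ys) = red (xs @ ys)"
  by (induction xs) (auto simp: red_reduced reduced_red)

lemma red_inv_letter_cancel: "red (inv_letter x # x # zs) = red zs"
  using reduced_red[of zs] by (auto simp: reduced_Cons split: list.split)

lemma red_inv_word_cancel: "red (inv_word v @ v @ zs) = red zs"
proof (induction v arbitrary: zs)
  case Nil
  then show ?case by (simp add: inv_word_def)
next
  case (Cons x v)
  have "red (inv_word (x # v) @ (x # v) @ zs) = red (inv_word v @ red (inv_letter x # x # v @ zs))"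
    by (simp add: inv_word_Cons red_append_red del: red.simps)
  also have "\<dots> = red zs"
    by (simp only: red_inv_letter_cancel red_append_red Cons.IH)
  finally show ?case .
qed

lemma red_append_inv_word_cancel: "red (xs @ inv_word v @ v @ zs) = red (xs @ zs)"
  by (metis red_append_red red_inv_word_cancel)

lemma act_Nil [simp]: "act [] y = y"
  by (simp add: act_def)

lemma act_Cons [simp]: "act (x # s) y = lmul x (act s y)"
  by (simp add: act_def)

lemma act_append: "act (s @ t) y = act s (act t y)"
  by (simp add: act_def)

lemma conc_singleton: "conc [x] z = case_nat x z"
  by (rule ext) (simp add: conc_def split: nat.split)

lemma conc_Cons: "conc (x # s) y = conc [x] (conc s y)"
  by (rule ext) (auto simp: conc_def nth_Cons split: nat.split)

lemma lmul_Ybd: "z \<in> Ybd r \<Longrightarrow> fst x < r \<Longrightarrow> lmul x z \<in> Ybd r"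
  by (cases "z 0 = inv_letter x") (auto simp: lmul_def conc_singleton Ybd_def split: nat.split)

lemma act_Ybd: "z \<in> Ybd r \<Longrightarrow> \<forall>x\<in>set s. fst x < r \<Longrightarrow> act s z \<in> Ybd r"
  by (induction s) (auto intro: lmul_Ybd)

lemma lmul_inv_letter:
  assumes "z \<in> Ybd r"
  shows "lmul (inv_letter x) (lmul x z) = z"
proof (cases "z 0 = inv_letter x")
  case True
  moreover have "z (Suc 0) \<noteq> x"
    using assms True unfolding Ybd_def by (metis (mono_tags) inv_letter_inv_letter mem_Collect_eq)
  ultimately show ?thesis
    by (intro ext) (simp add: lmul_def conc_singleton split: nat.split)
qed (simp add: lmul_def conc_singleton)

lemma act_inv_word: "z \<in> Ybd r \<Longrightarrow> \<forall>x\<in>set w. fst x < r \<Longrightarrow> act (inv_word w) (act w z) = z"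
proof (induction w)
  case Nil
  then show ?case by (simp add: inv_word_def)
next
  case (Cons x w)
  have "act w z \<in> Ybd r" using Cons.prems by (simp add: act_Ybd)
  then show ?case using Cons by (simp add: inv_word_Cons act_append lmul_inv_letter)
qed

lemma act_inv_word': "z \<in> Ybd r \<Longrightarrow> \<forall>x\<in>set w. fst x < r \<Longrightarrow> act w (act (inv_word w) z) = z"
  using act_inv_word[of z r "inv_word w"] by (simp add: set_inv_word)

lemma act_eq_conc:
  assumes "reduced s" and "s \<noteq> [] \<longrightarrow> z 0 \<noteq> inv_letter (last s)"
  shows "act s z = conc s z"
  using assms
proof (induction s)
  case Nil
  then show ?case by (simp add: conc_def)
next
  case (Cons x s)
  show ?case
  proof (cases "s = []")
    case True
    then show ?thesis using Cons.prems by (simp add: lmul_def)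
  next
    case False
    then have "act s z = conc s z" and "conc s z 0 \<noteq> inv_letter x"
      using Cons by (simp_all add: reduced_Cons conc_def hd_conv_nth)
    then show ?thesis by (simp add: lmul_def conc_Cons[symmetric])
  qed
qed

lemma starts_Y_iff_act:
  "reduced s \<Longrightarrow> starts_Y r s y \<longleftrightarrow>
     s \<noteq> [] \<and> (\<exists>y'\<in>Ybd r. y = act s y' \<and> y' 0 \<noteq> inv_letter (last s))"
  by (auto simp: starts_Y_def act_eq_conc) (metis act_eq_conc)

lemma starts_Y_act_iff:
  assumes "reduced s" "s \<noteq> []" "\<forall>x\<in>set s. fst x < r" "z \<in> Ybd r"
  shows "starts_Y r s (act s z) \<longleftrightarrow> z 0 \<noteq> inv_letter (last s)"
proof -
  have "act s z = act s z' \<longleftrightarrow> z = z'" if "z' \<in> Ybd r" for z'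
    using act_inv_word[OF assms(4) assms(3)] act_inv_word[OF that assms(3)] by metis
  then show ?thesis using assms by (auto simp: starts_Y_iff_act)
qed

lemma starts_Y_singleton_iff: "z \<in> Ybd r \<Longrightarrow> starts_Y r [x] z \<longleftrightarrow> z 0 = x"
proof
  assume "z \<in> Ybd r" "z 0 = x"
  then have "z = conc [x] (\<lambda>i. z (Suc i))" and "(\<lambda>i. z (Suc i)) \<in> Ybd r"
    by (auto simp: conc_singleton Ybd_def split: nat.split)
  moreover have "z (Suc 0) \<noteq> inv_letter x"
    using \<open>z \<in> Ybd r\<close> \<open>z 0 = x\<close> by (auto simp: Ybd_def)
  ultimately show "starts_Y r [x] z" by (auto simp: starts_Y_def)
qed (auto simp: starts_Y_def conc_def)

lemma starts_Y_append_iff: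
  assumes "v @ s \<in> Gamma r" "s \<noteq> []" "y \<in> Ybd r"
  shows "starts_Y r (v @ s) y \<longleftrightarrow> starts_Y r s (act (inv_word v) y)"
proof -
  have letters: "\<forall>x\<in>set v. fst x < r" "\<forall>x\<in>set s. fst x < r"
    using assms(1) by (auto simp: Gamma_def)
  have "y = act v (act s y') \<longleftrightarrow> act (inv_word v) y = act s y'" if "y' \<in> Ybd r" for y'
    using act_inv_word[OF act_Ybd[OF that letters(2)] letters(1)] act_inv_word'[OF assms(3) letters(1)]
    by metis
  then show ?thesis
    using assms(1,2) by (auto simp: Gamma_def starts_Y_iff_act reduced_append act_append)
qed

lemma act_in_V_iff_not_starts_Y:
  assumes "t \<in> Gamma r" "y \<in> Ybd r" "prefix s t" "s \<noteq> []"
  shows "act t y \<in> V r s \<longleftrightarrow> \<not> starts_Y r (red (inv_word t @ s @ [inv_letter (last s)])) y"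
proof -
  obtain w where t: "t = s @ w" using assms(3) by (auto simp: prefix_def)
  obtain s' x where s: "s = s' @ [x]" using assms(4) rev_exhaust by blast
  have letters: "\<forall>x\<in>set s. fst x < r" "\<forall>x\<in>set w. fst x < r"
    using assms(1) by (auto simp: Gamma_def t)
  have red_s: "reduced s" and "reduced (x # w)"
    using assms(1) by (auto simp: Gamma_def t s reduced_append reduced_Cons)
  then have red_xw: "reduced (inv_word w @ [inv_letter x])"
    by (simp add: reduced_inv_word flip: inv_word_Cons)
  have xw: "inv_word w @ [inv_letter x] \<in> Gamma r"
    using red_xw letters by (auto simp: Gamma_def set_inv_word s)
  define z where "z = act w y"
  have z: "z \<in> Ybd r" using act_Ybd assms(2) letters(2) by (simp add: z_def)
  have "act t y \<in> V r s \<longleftrightarrow> z 0 \<noteq> inv_letter x"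
    using starts_Y_act_iff[OF red_s assms(4) letters(1) z] act_Ybd[OF z letters(1)]
    by (simp add: V_def t act_append z_def s)
  moreover have "red (inv_word t @ s @ [inv_letter x]) = inv_word w @ [inv_letter x]"
    using red_append_inv_word_cancel[of "inv_word w" s "[inv_letter x]"] red_reduced[OF red_xw]
    by (simp add: t inv_word_append)
  moreover have "starts_Y r (inv_word w @ [inv_letter x]) y \<longleftrightarrow> z 0 = inv_letter x"
    using starts_Y_append_iff[OF xw _ assms(2)] starts_Y_singleton_iff[OF z]
    by (simp add: z_def)
  ultimately show ?thesis by (simp add: s)
qed

theorem lemma5p6:
  fixes r n :: nat and t :: "letter list" and y :: "nat \<Rightarrow> letter"
  assumes "r \<ge> 2" and "n \<ge> 2"
    and "t \<in> Gamma r" and "y \<in> Ybd r"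
    and "starts_G (u n) t"
  shows "act t y \<in> V r (u n) \<longleftrightarrow>
         \<not> starts_Y r (red (inv_word t @ u n @ [gb])) y"
  using act_in_V_iff_not_starts_Y[OF assms(3,4), of "u n"] assms(5)
  by (simp add: starts_G_def u_def)

end
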